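(* Let $b\ge2$ be an integer, $\lambda\in(1/b,1)$, and let $\phi$ be a $\mathbb{Z}$-periodic Lipschitz function such that $W=W^\phi_{\lambda,b}$ is not Lipschitz. Then every $C^2$-regulating period of $W$ is a rational number.
   Context: $W^\phi_{\lambda,b}(x)=\sum_{n\ge0}\lambda^n\phi(b^nx)$. For $k\in\mathbb{Z}_+$, $t\in\mathbb{R}$ is a $C^k$-regulating period of $W$ if $x\mapsto W(x+t)-W(x)$ is a $C^k$ function. *)

theory Defs
  imports "HOL-Analysis.Analysis"
begin

definition weierstrass_fun :: "(real \<Rightarrow> real) \<Rightarrow> real \<Rightarrow> nat \<Rightarrow> real \<Rightarrow> real" where
  "weierstrass_fun \<phi> lam b x = (\<Sum>n. lam ^ n * \<phi> (real b ^ n * x))"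

definition C_k :: "nat \<Rightarrow> (real \<Rightarrow> real) \<Rightarrow> bool" where
  "C_k k f \<longleftrightarrow> (\<exists>D :: nat \<Rightarrow> real \<Rightarrow> real. D 0 = f \<and>
      (\<forall>i<k. \<forall>x. (D i has_real_derivative D (Suc i) x) (at x)) \<and>
      continuous_on UNIV (D k))"

definition regulating_period :: "nat \<Rightarrow> (real \<Rightarrow> real) \<Rightarrow> real \<Rightarrow> bool" where
  "regulating_period k W t \<longleftrightarrow> C_k k (\<lambda>x. W (x + t) - W x)"

end

theory Submission
  imports Defs
begin

text \<open>
  Let A be the transfer operator of x \<mapsto> b x, which averages a function over the b
  preimages of a point. From W = \<phi> + \<lambda> W(b x) one gets
  A^m W = \<lambda>^m (W + \<Sum>_{j<m} A^{j+1} \<phi> / \<lambda>^{j+1}), and A^j \<phi> is (Lp / b^j)-Lipschitz,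
  so since \<lambda> b > 1 the corrections converge to a Lipschitz function R. For U = W + R and a
  period t for which g(x) = W(x + t) - W(x) is Lipschitz (as it is when g is C^1, g being
  1-periodic), A^m g / \<lambda>^m is then uniformly
  within O(r^m), r = 1 / (\<lambda> b), of U(x + b^m t) - U(x), while its oscillation is O(r^m);
  as U is bounded, U(x + b^m t) - U(x) = O(r^m).

  U is continuous, 1-periodic and not constant (else W = const - R would be Lipschitz), so its
  periods form a discrete group containing 1, made of rationals. Eventually b^m t is close to
  periods p_m; then b p_m - p_{m+1} is a short period, hence 0, which forces b^m t = p_m.
\<close>

section \<open>Periods of real functions\<close>

definition is_period :: "(real \<Rightarrow> real) \<Rightarrow> real \<Rightarrow> bool" where
  "is_period f p \<longleftrightarrow> (\<forall>x. f (x + p) = f x)"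

lemma is_periodD: "is_period f p \<Longrightarrow> f (x + p) = f x"
  unfolding is_period_def by blast

lemma is_period_0 [simp]: "is_period f 0"
  unfolding is_period_def by simp

lemma is_period_add: "is_period f p \<Longrightarrow> is_period f q \<Longrightarrow> is_period f (p + q)"
  unfolding is_period_def by (metis add.assoc)

lemma is_period_minus: "is_period f p \<Longrightarrow> is_period f (- p)"
  unfolding is_period_def by (metis add.commute add_minus_cancel)

lemma is_period_diff: "is_period f p \<Longrightarrow> is_period f q \<Longrightarrow> is_period f (p - q)"
  using is_period_add[of f p "- q"] is_period_minus[of f q] by simp

lemma is_period_of_nat_mult: "is_period f p \<Longrightarrow> is_period f (real k * p)"
  by (induction k) (simp_all add: distrib_right is_period_add)

lemma is_period_of_int_mult: "is_period f p \<Longrightarrow> is_period f (of_int n * p)"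
  using is_period_of_nat_mult[of f p "nat \<bar>n\<bar>"] is_period_minus[of f "real (nat \<bar>n\<bar>) * p"]
  by (cases "n \<ge> 0") simp_all

lemma is_period_of_int: "is_period f 1 \<Longrightarrow> is_period f (of_int n)"
  using is_period_of_int_mult[of f 1 n] by simp

lemma is_period_of_nat: "is_period f 1 \<Longrightarrow> is_period f (real k)"
  using is_period_of_nat_mult[of f 1 k] by simp

lemma is_period_increment:
  assumes "is_period f p"
  shows "is_period (\<lambda>x. f (x + t) - f x) p"
  unfolding is_period_def
proof
  fix x
  have "f (x + p + t) = f (x + t + p)"
    by (simp add: algebra_simps)
  then show "f (x + p + t) - f (x + p) = f (x + t) - f x"
    using is_periodD[OF assms] by simp
qed

lemma periodic_eq_frac:
  assumes "is_period f 1"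
  shows "f x = f (frac x)"
proof -
  have "f (frac x + of_int \<lfloor>x\<rfloor>) = f (frac x)"
    by (rule is_periodD[OF is_period_of_int[OF assms]])
  then show ?thesis by (simp add: frac_def)
qed

lemma periodic_lipschitz_oscillation:
  assumes "is_period f 1" and "L-lipschitz_on UNIV f"
  shows "\<bar>f x - f y\<bar> \<le> L"
proof -
  have "\<bar>frac x - frac y\<bar> \<le> 1"
    using frac_lt_1[of x] frac_lt_1[of y] frac_ge_0[of x] frac_ge_0[of y] by linarith
  then have "L * \<bar>frac x - frac y\<bar> \<le> L"
    using lipschitz_on_nonneg[OF assms(2)] by (simp add: mult_left_le)
  moreover have "\<bar>f (frac x) - f (frac y)\<bar> \<le> L * \<bar>frac x - frac y\<bar>"
    using lipschitz_onD[OF assms(2)] by (simp add: dist_real_def)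
  ultimately show ?thesis
    using periodic_eq_frac[OF assms(1)] by (metis order_trans)
qed

lemma continuous_periodic_bounded:
  assumes "continuous_on UNIV f" and "is_period f 1"
  obtains B where "\<And>x. \<bar>f x\<bar> \<le> B"
proof -
  have "compact (f ` {0..1})"
    by (rule compact_continuous_image[OF continuous_on_subset[OF assms(1)] compact_Icc]) simp
  then obtain B where B: "\<forall>z\<in>f ` {0..1}. \<bar>z\<bar> \<le> B"
    using compact_imp_bounded bounded_iff by (metis real_norm_def)
  have "\<bar>f x\<bar> \<le> B" for x
    using B periodic_eq_frac[OF assms(2), of x] frac_ge_0[of x] frac_lt_1[of x] by force
  then show thesis by (rule that)
qed

lemma C_k_has_continuous_derivative:
  assumes "C_k k g" and "1 \<le> k"
  obtains g' where "\<And>x. (g has_real_derivative g' x) (at x)" and "continuous_on UNIV g'"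
proof -
  obtain D where "D 0 = g" and D: "\<And>i x. i < k \<Longrightarrow> (D i has_real_derivative D (Suc i) x) (at x)"
    and "continuous_on UNIV (D k)"
    using \<open>C_k k g\<close> unfolding C_k_def by blast
  have "(g has_real_derivative D 1 x) (at x)" for x
    using D[of 0] \<open>D 0 = g\<close> \<open>1 \<le> k\<close> by simp
  moreover have "continuous_on UNIV (D 1)"
  proof (cases "k = 1")
    case True
    then show ?thesis using \<open>continuous_on UNIV (D k)\<close> by simp
  next
    case False
    then have "(D 1 has_real_derivative D 2 x) (at x)" for x
      using D[of 1] \<open>1 \<le> k\<close> by (simp add: numeral_2_eq_2)
    then show ?thesis
      by (meson DERIV_isCont continuous_at_imp_continuous_on)
  qed
  ultimately show thesis by (rule that)
qed

lemma periodic_continuous_derivative_lipschitz: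
  assumes g': "\<And>x. (g has_real_derivative g' x) (at x)" and "continuous_on UNIV g'"
    and per: "is_period g 1"
  obtains K where "K-lipschitz_on UNIV g"
proof -
  have "is_period g' 1"
    unfolding is_period_def
  proof
    fix x
    have "((\<lambda>x. g (x + 1)) has_real_derivative g' (x + 1)) (at x)"
      using DERIV_shift g' by blast
    then show "g' (x + 1) = g' x"
      using is_periodD[OF per] g'[of x] DERIV_unique by simp
  qed
  then obtain M where M: "\<And>x. \<bar>g' x\<bar> \<le> M"
    using continuous_periodic_bounded[OF \<open>continuous_on UNIV g'\<close>] by blast
  have "M-lipschitz_on UNIV g"
  proof (rule lipschitz_on_leI)
    fix x y :: real
    assume "x \<le> y"
    show "dist (g x) (g y) \<le> M * dist x y"
    proof (cases "x = y")
      case False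
      then obtain z where "g y - g x = (y - x) * g' z"
        using MVT2[of x y g g'] \<open>x \<le> y\<close> g' by fastforce
      then have "dist (g x) (g y) = (y - x) * \<bar>g' z\<bar>"
        using \<open>x \<le> y\<close> by (metis abs_minus_commute abs_mult abs_of_nonneg diff_ge_0_iff_ge dist_real_def)
      also have "\<dots> \<le> (y - x) * M"
        using M[of z] \<open>x \<le> y\<close> by (intro mult_left_mono) simp_all
      finally show ?thesis
        using \<open>x \<le> y\<close> by (simp add: dist_real_def mult.commute)
    qed simp
  next
    show "0 \<le> M" using M[of 0] by simp
  qed
  then show thesis by (rule that)
qed

lemma bounded_increment_constant_bound:
  fixes f :: "real \<Rightarrow> real"
  assumes bounded: "\<And>y. \<bar>f y\<bar> \<le> B" and near: "\<And>y. \<bar>f (y + s) - f y - \<kappa>\<bar> \<le> \<rho>"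
  shows "\<bar>\<kappa>\<bar> \<le> \<rho>"
proof (rule ccontr)
  assume "\<not> \<bar>\<kappa>\<bar> \<le> \<rho>"
  have telescope: "\<bar>f (real n * s) - f 0 - real n * \<kappa>\<bar> \<le> real n * \<rho>" for n
  proof (induction n)
    case (Suc n)
    have "\<bar>f (real n * s + s) - f (real n * s) - \<kappa>\<bar> \<le> \<rho>"
      by (rule near)
    with Suc show ?case
      by (simp add: algebra_simps)
  qed simp
  obtain n :: nat where n: "2 * B / (\<bar>\<kappa>\<bar> - \<rho>) < real n"
    using reals_Archimedean2 by blast
  have "real n * \<bar>\<kappa>\<bar> \<le> \<bar>f (real n * s) - f 0\<bar> + real n * \<rho>"
    using telescope[of n] abs_triangle_ineq2[of "f (real n * s) - f 0" "real n * \<kappa>"]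
    by (simp add: abs_mult)
  also have "\<bar>f (real n * s) - f 0\<bar> \<le> 2 * B"
    using bounded[of "real n * s"] bounded[of 0] by linarith
  finally have "real n * (\<bar>\<kappa>\<bar> - \<rho>) \<le> 2 * B"
    by (simp add: algebra_simps)
  then show False
    using n \<open>\<not> \<bar>\<kappa>\<bar> \<le> \<rho>\<close> by (simp add: field_simps)
qed

section \<open>Discrete groups of periods\<close>

lemma continuous_small_periods_imp_constant:
  assumes cont: "continuous_on UNIV f"
    and small: "\<And>\<epsilon>. \<epsilon> > 0 \<Longrightarrow> \<exists>p. is_period f p \<and> p \<noteq> 0 \<and> \<bar>p\<bar> < \<epsilon>"
  shows "f x = f 0"
proof (rule ccontr)
  assume ne: "f x \<noteq> f 0"
  obtain d where "d > 0" and d: "\<And>z. \<bar>z\<bar> < d \<Longrightarrow> \<bar>f z - f 0\<bar> < \<bar>f x - f 0\<bar>"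
    using cont ne unfolding continuous_on_iff
    by (metis UNIV_I dist_real_def diff_zero zero_less_abs_iff right_minus_eq)
  obtain p where p: "is_period f p" "p \<noteq> 0" "\<bar>p\<bar> < d"
    using small[OF \<open>d > 0\<close>] by blast
  define z where "z = x - of_int \<lfloor>x / \<bar>p\<bar>\<rfloor> * \<bar>p\<bar>"
  have "0 \<le> z" "z < \<bar>p\<bar>"
    using p(2) floor_divide_lower[of "\<bar>p\<bar>" x] floor_divide_upper[of "\<bar>p\<bar>" x]
    unfolding z_def by (simp_all add: algebra_simps)
  have "is_period f \<bar>p\<bar>"
    using p(1) is_period_minus[OF p(1)] by (cases "p \<ge> 0") simp_all
  then have "f x = f z"
    using is_periodD[OF is_period_of_int_mult, of f "\<bar>p\<bar>" z "\<lfloor>x / \<bar>p\<bar>\<rfloor>"]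
    unfolding z_def by simp
  then show False
    using d[of z] \<open>0 \<le> z\<close> \<open>z < \<bar>p\<bar>\<close> p(3) by simp
qed

lemma nonconstant_continuous_periods_separated:
  assumes "continuous_on UNIV f" and "f x \<noteq> f 0"
  obtains \<epsilon> where "\<epsilon> > 0" and "\<And>p. is_period f p \<Longrightarrow> p \<noteq> 0 \<Longrightarrow> \<epsilon> \<le> \<bar>p\<bar>"
  using continuous_small_periods_imp_constant[OF assms(1)] assms(2) by (meson not_le)

lemma separated_periods_rational:
  assumes "is_period f 1" and "\<epsilon> > 0"
    and sep: "\<And>p. is_period f p \<Longrightarrow> p \<noteq> 0 \<Longrightarrow> \<epsilon> \<le> \<bar>p\<bar>"
    and "is_period f p"
  shows "p \<in> \<rat>"
proof -
  obtain N :: nat where N: "1 / \<epsilon> < real N"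
    using reals_Archimedean2 by blast
  moreover have "0 < 1 / \<epsilon>"
    using \<open>\<epsilon> > 0\<close> by simp
  ultimately have "real N > 0"
    by linarith
  then have "N > 0" and N_eps: "1 / real N < \<epsilon>"
    using N \<open>\<epsilon> > 0\<close> by (simp_all add: field_simps)
  obtain h k where "0 < k" and hk: "\<bar>of_int k * p - of_int h\<bar> < 1 / real N"
    using Dirichlet_approx[OF \<open>N > 0\<close>] by blast
  have "is_period f (of_int k * p - of_int h)"
    by (intro is_period_diff is_period_of_int_mult is_period_of_int assms)
  then have "of_int k * p - of_int h = 0"
    using sep hk N_eps by (meson less_trans not_le)
  then have "p = of_int h / of_int k"
    using \<open>0 < k\<close> by (simp add: field_simps)
  then show ?thesis by simp
qed

lemma limit_of_almost_periods_is_period: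
  assumes cont: "continuous_on UNIV f" and lim: "s \<longlonglongrightarrow> l" and "\<delta> \<longlonglongrightarrow> 0"
    and almost: "\<And>n y. \<bar>f (y + s n) - f y\<bar> \<le> \<delta> n"
  shows "is_period f l"
  unfolding is_period_def
proof
  fix y
  have "(\<lambda>n. \<bar>f (y + s n) - f y\<bar>) \<longlonglongrightarrow> \<bar>f (y + l) - f y\<bar>"
    using cont lim by (intro tendsto_intros continuous_on_tendsto_compose[of UNIV f]) auto
  then have "\<bar>f (y + l) - f y\<bar> \<le> 0"
    by (rule LIMSEQ_le[OF _ \<open>\<delta> \<longlonglongrightarrow> 0\<close>]) (use almost in auto)
  then show "f (y + l) = f y" by simp
qed

lemma almost_period_near_period:
  assumes cont: "continuous_on UNIV f" and per: "is_period f 1" and "\<epsilon> > 0"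
  obtains \<eta> where "\<eta> > 0"
    and "\<And>s. (\<And>y. \<bar>f (y + s) - f y\<bar> \<le> \<eta>) \<Longrightarrow> \<exists>p. is_period f p \<and> \<bar>s - p\<bar> < \<epsilon>"
proof (rule ccontr)
  assume "\<not> thesis"
  then have "\<forall>n. \<exists>s. (\<forall>y. \<bar>f (y + s) - f y\<bar> \<le> inverse (real (Suc n)))
                    \<and> (\<forall>p. is_period f p \<longrightarrow> \<epsilon> \<le> \<bar>s - p\<bar>)"
    using that by (metis not_le of_nat_0_less_iff positive_imp_inverse_positive zero_less_Suc)
  then obtain s where s_almost: "\<And>n y. \<bar>f (y + s n) - f y\<bar> \<le> inverse (real (Suc n))"
    and s_far: "\<And>n p. is_period f p \<Longrightarrow> \<epsilon> \<le> \<bar>s n - p\<bar>"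
    by metis
  text \<open>Reducing modulo 1 keeps both properties and makes the sequence bounded.\<close>
  define s' where "s' n = frac (s n)" for n
  have s'_almost: "\<bar>f (y + s' n) - f y\<bar> \<le> inverse (real (Suc n))" for y n
  proof -
    have "f (y + s' n + of_int \<lfloor>s n\<rfloor>) = f (y + s' n)"
      by (rule is_periodD[OF is_period_of_int[OF per]])
    then show ?thesis
      using s_almost[of y n] unfolding s'_def frac_def by (simp add: algebra_simps)
  qed
  have s'_far: "\<epsilon> \<le> \<bar>s' n - p\<bar>" if "is_period f p" for p n
  proof -
    have "is_period f (p + of_int \<lfloor>s n\<rfloor>)"
      by (intro is_period_add that is_period_of_int per)
    then show ?thesis
      using s_far unfolding s'_def frac_def by (simp add: algebra_simps)
  qed
  have "s' n \<in> {0..1}" for n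
    unfolding s'_def using frac_ge_0 frac_lt_1 less_imp_le by auto
  then obtain l \<rho> where "strict_mono \<rho>" and lim: "(s' \<circ> \<rho>) \<longlonglongrightarrow> l"
    using compact_imp_seq_compact[OF compact_Icc] by (metis seq_compactE)
  have "(\<lambda>n. inverse (real (Suc (\<rho> n)))) \<longlonglongrightarrow> 0"
    using LIMSEQ_subseq_LIMSEQ[OF LIMSEQ_inverse_real_of_nat \<open>strict_mono \<rho>\<close>]
    by (simp add: o_def)
  then have "is_period f l"
    using limit_of_almost_periods_is_period[OF cont lim] s'_almost by simp
  then have "\<epsilon> \<le> \<bar>(s' \<circ> \<rho>) n - l\<bar>" for n
    using s'_far by simp
  moreover obtain n where "\<bar>(s' \<circ> \<rho>) n - l\<bar> < \<epsilon>"
    using LIMSEQ_D[OF lim \<open>\<epsilon> > 0\<close>] by auto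
  ultimately show False
    by (meson not_le)
qed

lemma eventually_geometric_bounded_imp_zero:
  fixes e :: "nat \<Rightarrow> real"
  assumes "1 < \<bar>c\<bar>"
    and step: "\<And>m. M \<le> m \<Longrightarrow> e (Suc m) = c * e m"
    and bounded: "\<And>m. M \<le> m \<Longrightarrow> \<bar>e m\<bar> \<le> B"
  shows "e M = 0"
proof (rule ccontr)
  assume "e M \<noteq> 0"
  have e_iter: "e (M + j) = c ^ j * e M" for j
    by (induction j) (simp_all add: step)
  obtain j where "B / \<bar>e M\<bar> < \<bar>c\<bar> ^ j"
    using real_arch_pow[OF \<open>1 < \<bar>c\<bar>\<close>] by blast
  then have "B < \<bar>e (M + j)\<bar>"
    using \<open>e M \<noteq> 0\<close> by (simp add: e_iter abs_mult power_abs field_simps)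
  then show False
    using bounded[of "M + j"] by simp
qed

lemma eventually_near_periods:
  assumes cont: "continuous_on UNIV f" and per: "is_period f 1" and "\<epsilon> > 0"
    and decay: "\<And>m y. \<bar>f (y + a m) - f y\<bar> \<le> C * r ^ m" and "0 < r" "r < 1"
  obtains M p where "\<And>m. M \<le> m \<Longrightarrow> is_period f (p m)" and "\<And>m. M \<le> m \<Longrightarrow> \<bar>a m - p m\<bar> < \<epsilon>"
proof -
  obtain \<eta> where "\<eta> > 0"
    and near: "\<And>s. (\<And>y. \<bar>f (y + s) - f y\<bar> \<le> \<eta>) \<Longrightarrow> \<exists>p. is_period f p \<and> \<bar>s - p\<bar> < \<epsilon>"
    using almost_period_near_period[OF cont per \<open>\<epsilon> > 0\<close>] by blast
  have "(\<lambda>m. C * r ^ m) \<longlonglongrightarrow> 0"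
    using \<open>0 < r\<close> \<open>r < 1\<close> by (intro tendsto_mult_right_zero LIMSEQ_power_zero) simp
  then obtain M where "\<And>m. M \<le> m \<Longrightarrow> C * r ^ m < \<eta>"
    using order_tendstoD(2)[OF _ \<open>\<eta> > 0\<close>] eventually_sequentially by metis
  then have "\<forall>m. \<exists>p. M \<le> m \<longrightarrow> is_period f p \<and> \<bar>a m - p\<bar> < \<epsilon>"
    using near decay by (meson less_imp_le order_trans)
  then show thesis
    using that by metis
qed

lemma rational_if_dilated_increments_decay:
  fixes f :: "real \<Rightarrow> real" and b :: nat
  assumes cont: "continuous_on UNIV f" and per: "is_period f 1"
    and "\<epsilon> > 0" and sep: "\<And>p. is_period f p \<Longrightarrow> p \<noteq> 0 \<Longrightarrow> \<epsilon> \<le> \<bar>p\<bar>"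
    and decay: "\<And>m y. \<bar>f (y + real b ^ m * t) - f y\<bar> \<le> C * r ^ m"
    and "0 < r" "r < 1" and "b \<ge> 2"
  shows "t \<in> \<rat>"
proof -
  define \<epsilon>' where "\<epsilon>' = \<epsilon> / (real b + 2)"
  have "\<epsilon>' > 0" and \<epsilon>'_small: "(real b + 1) * \<epsilon>' < \<epsilon>"
    using \<open>\<epsilon> > 0\<close> unfolding \<epsilon>'_def by (simp_all add: field_simps)
  obtain M p where p: "\<And>m. M \<le> m \<Longrightarrow> is_period f (p m)"
    and e_small: "\<And>m. M \<le> m \<Longrightarrow> \<bar>real b ^ m * t - p m\<bar> < \<epsilon>'"
    using eventually_near_periods[OF cont per \<open>\<epsilon>' > 0\<close> decay \<open>0 < r\<close> \<open>r < 1\<close>] by blast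
  define e where "e m = real b ^ m * t - p m" for m
  text \<open>The period \<open>b p m - p (Suc m)\<close> is shorter than \<open>\<epsilon>\<close>, hence zero: the errors grow
    geometrically, and being small they vanish.\<close>
  have "e (Suc m) = real b * e m" if "M \<le> m" for m
  proof -
    have "is_period f (real b * p m - p (Suc m))"
      using that by (intro is_period_diff is_period_of_nat_mult p) simp_all
    moreover have "real b * p m - p (Suc m) = e (Suc m) - real b * e m"
      unfolding e_def by (simp add: algebra_simps)
    moreover have "\<bar>e (Suc m) - real b * e m\<bar> < \<epsilon>"
    proof -
      have "\<bar>e (Suc m) - real b * e m\<bar> \<le> \<bar>e (Suc m)\<bar> + real b * \<bar>e m\<bar>"
        by (simp add: abs_mult abs_triangle_ineq4[THEN order_trans])
      also have "\<dots> \<le> \<epsilon>' + real b * \<epsilon>'"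
        using e_small[of m] e_small[of "Suc m"] that unfolding e_def
        by (intro add_mono mult_left_mono) simp_all
      finally show ?thesis using \<epsilon>'_small by (simp add: algebra_simps)
    qed
    ultimately show ?thesis
      using sep by force
  qed
  then have "e M = 0"
    using \<open>b \<ge> 2\<close> e_small unfolding e_def[symmetric]
    by (intro eventually_geometric_bounded_imp_zero[where B = \<epsilon>'])
       (auto intro: less_imp_le)
  then have "real b ^ M * t \<in> \<rat>"
    using separated_periods_rational[OF per \<open>\<epsilon> > 0\<close> sep p[of M]] unfolding e_def by simp
  then have "real b ^ M * t / real b ^ M \<in> \<rat>"
    by (intro Rats_divide) (simp_all del: of_nat_power add: of_nat_power[symmetric])
  then show ?thesis
    using \<open>b \<ge> 2\<close> by simp
qed

section \<open>The transfer operator of the dilation by b\<close>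

text \<open>On 1-periodic functions it inverts composition with x \<mapsto> b x and divides Lipschitz
  constants by b.\<close>

definition transfer_op :: "nat \<Rightarrow> (real \<Rightarrow> real) \<Rightarrow> real \<Rightarrow> real" where
  "transfer_op b f x = (\<Sum>k<b. f ((x + real k) / real b)) / real b"

lemma transfer_op_linear:
  "transfer_op b (\<lambda>x. c * f x + d * g x) y = c * transfer_op b f y + d * transfer_op b g y"
  unfolding transfer_op_def by (simp add: sum.distrib sum_distrib_left add_divide_distrib)

lemma transfer_iter_linear:
  "(transfer_op b ^^ m) (\<lambda>x. c * f x + d * g x) y
     = c * (transfer_op b ^^ m) f y + d * (transfer_op b ^^ m) g y"
proof (induction m arbitrary: y)
  case (Suc m)
  then have "(transfer_op b ^^ m) (\<lambda>x. c * f x + d * g x)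
      = (\<lambda>x. c * (transfer_op b ^^ m) f x + d * (transfer_op b ^^ m) g x)"
    by blast
  then show ?case
    by (simp add: transfer_op_linear)
qed simp

lemma transfer_op_shift:
  assumes "b > 0"
  shows "transfer_op b (\<lambda>x. f (x + s)) y = transfer_op b f (y + real b * s)"
proof -
  have "(y + real k) / real b + s = (y + real b * s + real k) / real b" for k
    using assms by (simp add: field_simps)
  then show ?thesis
    unfolding transfer_op_def by simp
qed

lemma transfer_iter_shift:
  assumes "b > 0"
  shows "(transfer_op b ^^ m) (\<lambda>x. f (x + s)) y = (transfer_op b ^^ m) f (y + real b ^ m * s)"
proof (induction m arbitrary: y)
  case (Suc m)
  then have "(transfer_op b ^^ m) (\<lambda>x. f (x + s)) = (\<lambda>x. (transfer_op b ^^ m) f (x + real b ^ m * s))"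
    by blast
  then show ?case
    using transfer_op_shift[OF assms] by (simp add: mult.assoc)
qed simp

lemma transfer_op_periodic:
  assumes "b > 0" and per: "is_period f 1"
  shows "is_period (transfer_op b f) 1"
  unfolding is_period_def
proof
  fix x
  obtain n where n: "b = Suc n"
    using \<open>b > 0\<close> gr0_implies_Suc by blast
  have "f ((x + 1 + real n) / real b) = f (x / real b + 1)"
    using n by (simp add: field_simps)
  also have "\<dots> = f ((x + real 0) / real b)"
    using is_periodD[OF per] by simp
  finally have "(\<Sum>k<b. f ((x + 1 + real k) / real b))
      = (\<Sum>k<n. f ((x + real (Suc k)) / real b)) + f ((x + real 0) / real b)"
    unfolding n sum.lessThan_Suc by (simp add: algebra_simps)
  also have "\<dots> = (\<Sum>k<b. f ((x + real k) / real b))"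
    unfolding n sum.lessThan_Suc_shift by simp
  finally have "(\<Sum>k<b. f ((x + 1 + real k) / real b)) = (\<Sum>k<b. f ((x + real k) / real b))" .
  then show "transfer_op b f (x + 1) = transfer_op b f x"
    unfolding transfer_op_def by simp
qed

lemma transfer_iter_periodic:
  "b > 0 \<Longrightarrow> is_period f 1 \<Longrightarrow> is_period ((transfer_op b ^^ m) f) 1"
  by (induction m) (simp_all add: transfer_op_periodic)

lemma transfer_op_lipschitz:
  assumes "b > 0" and lip: "L-lipschitz_on UNIV f"
  shows "(L / real b)-lipschitz_on UNIV (transfer_op b f)"
proof (rule lipschitz_onI)
  fix x y :: real
  have "\<bar>f ((x + real k) / real b) - f ((y + real k) / real b)\<bar> \<le> L * (\<bar>x - y\<bar> / real b)" for k
  proof -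
    have "\<bar>(x + real k) / real b - (y + real k) / real b\<bar> = \<bar>x - y\<bar> / real b"
      using \<open>b > 0\<close> by (simp add: diff_divide_distrib[symmetric] abs_divide)
    then show ?thesis
      using lipschitz_onD[OF lip, of "(x + real k) / real b" "(y + real k) / real b"]
      by (simp add: dist_real_def)
  qed
  then have "\<bar>\<Sum>k<b. f ((x + real k) / real b) - f ((y + real k) / real b)\<bar> \<le> real b * (L * (\<bar>x - y\<bar> / real b))"
    by (intro order_trans[OF sum_abs] sum_bounded_above[of "{..<b}", simplified])
  then show "dist (transfer_op b f x) (transfer_op b f y) \<le> L / real b * dist x y"
    using \<open>b > 0\<close> unfolding transfer_op_def dist_real_def
    by (simp add: sum_subtractf diff_divide_distrib[symmetric] abs_divide field_simps)
next
  show "0 \<le> L / real b"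
    using lipschitz_on_nonneg[OF lip] by simp
qed

lemma transfer_iter_lipschitz:
  assumes "b > 0" and "L-lipschitz_on UNIV f"
  shows "(L / real b ^ m)-lipschitz_on UNIV ((transfer_op b ^^ m) f)"
proof (induction m)
  case (Suc m)
  have "(L / real b ^ m / real b)-lipschitz_on UNIV (transfer_op b ((transfer_op b ^^ m) f))"
    by (rule transfer_op_lipschitz[OF \<open>b > 0\<close> Suc.IH])
  then show ?case
    by (simp add: mult.commute)
qed (simp add: assms(2))

lemma transfer_iter_oscillation:
  assumes "b > 0" and "is_period f 1" and "L-lipschitz_on UNIV f"
  shows "\<bar>(transfer_op b ^^ m) f x - (transfer_op b ^^ m) f y\<bar> \<le> L / real b ^ m"
  using assms by (intro periodic_lipschitz_oscillation transfer_iter_periodic transfer_iter_lipschitz)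

section \<open>The Weierstrass function and its corrected version\<close>

locale weierstrass_setting =
  fixes \<phi> :: "real \<Rightarrow> real" and lam :: real and b :: nat and Lp :: real
  assumes b_ge_2: "b \<ge> 2" and lam_gt: "1 / real b < lam" and lam_lt_1: "lam < 1"
    and phi_periodic: "is_period \<phi> 1" and phi_lipschitz: "Lp-lipschitz_on UNIV \<phi>"
begin

abbreviation W :: "real \<Rightarrow> real" where
  "W \<equiv> weierstrass_fun \<phi> lam b"

lemma b_pos: "b > 0"
  using b_ge_2 by simp

lemma lam_pos: "lam > 0"
proof -
  have "0 < 1 / real b"
    using b_pos by simp
  then show ?thesis
    using lam_gt by linarith
qed

lemma phi_abs_le: "\<bar>\<phi> x\<bar> \<le> \<bar>\<phi> 0\<bar> + Lp"
  using periodic_lipschitz_oscillation[OF phi_periodic phi_lipschitz, of x 0] by linarith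

lemma weierstrass_term_le: "\<bar>lam ^ n * \<phi> (real b ^ n * x)\<bar> \<le> (\<bar>\<phi> 0\<bar> + Lp) * lam ^ n"
proof -
  have "\<bar>\<phi> (real b ^ n * x)\<bar> * lam ^ n \<le> (\<bar>\<phi> 0\<bar> + Lp) * lam ^ n"
    using phi_abs_le lam_pos by (intro mult_right_mono) simp_all
  then show ?thesis
    using lam_pos by (simp add: abs_mult mult.commute)
qed

lemma weierstrass_majorant_summable: "summable (\<lambda>n. (\<bar>\<phi> 0\<bar> + Lp) * lam ^ n)"
  using lam_pos lam_lt_1 by (intro summable_mult summable_geometric) simp

lemma weierstrass_summable: "summable (\<lambda>n. lam ^ n * \<phi> (real b ^ n * x))"
  by (rule summable_comparison_test'[OF weierstrass_majorant_summable])
    (simp only: real_norm_def weierstrass_term_le)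

lemma W_functional_equation: "W x = \<phi> x + lam * W (real b * x)"
proof -
  have "(\<Sum>n. lam ^ Suc n * \<phi> (real b ^ Suc n * x)) = W x - \<phi> x"
    using suminf_split_head[OF weierstrass_summable[of x]] by (simp add: weierstrass_fun_def)
  moreover have "(\<Sum>n. lam ^ Suc n * \<phi> (real b ^ Suc n * x)) = lam * W (real b * x)"
    unfolding weierstrass_fun_def
    by (subst suminf_mult[OF weierstrass_summable, symmetric]) (simp add: algebra_simps)
  ultimately show ?thesis by simp
qed

lemma W_periodic: "is_period W 1"
proof -
  have "\<phi> (real b ^ n * (x + 1)) = \<phi> (real b ^ n * x)" for n x
  proof -
    have "\<phi> (real b ^ n * x + real (b ^ n)) = \<phi> (real b ^ n * x)"
      by (rule is_periodD[OF is_period_of_nat[OF phi_periodic]])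
    then show ?thesis
      by (simp add: algebra_simps)
  qed
  then show ?thesis
    unfolding is_period_def weierstrass_fun_def by simp
qed

lemma W_continuous: "continuous_on UNIV W"
proof -
  have lim: "uniform_limit UNIV (\<lambda>n x. \<Sum>i<n. lam ^ i * \<phi> (real b ^ i * x)) W sequentially"
    unfolding weierstrass_fun_def[abs_def]
    by (rule Weierstrass_m_test[OF _ weierstrass_majorant_summable])
      (simp only: real_norm_def weierstrass_term_le)
  have "continuous_on UNIV (\<lambda>x. \<phi> (real b ^ i * x))" for i
    by (rule continuous_on_compose2[OF lipschitz_on_continuous_on[OF phi_lipschitz]])
      (auto intro!: continuous_intros)
  then have "continuous_on UNIV (\<lambda>x. \<Sum>i<n. lam ^ i * \<phi> (real b ^ i * x))" for n
    by (intro continuous_on_sum continuous_on_mult_left) simp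
  then show ?thesis
    using uniform_limit_theorem[OF _ lim] by simp
qed

lemma transfer_W: "transfer_op b W y = transfer_op b \<phi> y + lam * W y"
proof -
  have "W ((y + real k) / real b) = \<phi> ((y + real k) / real b) + lam * W y" for k
  proof -
    have "W ((y + real k) / real b) = \<phi> ((y + real k) / real b) + lam * W (y + real k)"
      using W_functional_equation[of "(y + real k) / real b"] b_pos by simp
    then show ?thesis
      using is_periodD[OF is_period_of_nat[OF W_periodic]] by simp
  qed
  then show ?thesis
    unfolding transfer_op_def using b_pos by (simp add: sum.distrib add_divide_distrib)
qed

lemma transfer_iter_W:
  "(transfer_op b ^^ m) W y = lam ^ m * (W y + (\<Sum>j<m. (transfer_op b ^^ Suc j) \<phi> y / lam ^ Suc j))"
proof (induction m arbitrary: y)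
  case (Suc m)
  have "transfer_op b W = (\<lambda>x. 1 * transfer_op b \<phi> x + lam * W x)"
    by (simp add: fun_eq_iff transfer_W)
  then have "(transfer_op b ^^ Suc m) W y = (transfer_op b ^^ m) (\<lambda>x. 1 * transfer_op b \<phi> x + lam * W x) y"
    by (simp add: funpow_Suc_right del: funpow.simps)
  also have "\<dots> = (transfer_op b ^^ Suc m) \<phi> y + lam * (transfer_op b ^^ m) W y"
    unfolding transfer_iter_linear by (simp add: funpow_Suc_right del: funpow.simps)
  also have "\<dots> = lam ^ Suc m * (W y + (\<Sum>j<m. (transfer_op b ^^ Suc j) \<phi> y / lam ^ Suc j)
      + (transfer_op b ^^ Suc m) \<phi> y / lam ^ Suc m)"
    using lam_pos by (simp add: Suc.IH distrib_left)
  finally show ?case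
    by (simp add: add.assoc)
qed simp

definition r :: real where
  "r = 1 / (lam * real b)"

lemma r_pos: "0 < r"
  unfolding r_def using lam_pos b_pos by simp

lemma r_lt_1: "r < 1"
  unfolding r_def using lam_gt b_pos by (simp add: field_simps)

lemma divide_dilation_power: "L / real b ^ n / lam ^ n = L * r ^ n"
  unfolding r_def by (simp add: power_one_over power_mult_distrib)

definition R_term :: "real \<Rightarrow> real \<Rightarrow> nat \<Rightarrow> real" where
  "R_term x y j = ((transfer_op b ^^ Suc j) \<phi> x - (transfer_op b ^^ Suc j) \<phi> y) / lam ^ Suc j"

lemma R_term_le: "\<bar>R_term x y j\<bar> \<le> Lp * r ^ Suc j"
proof -
  have "\<bar>R_term x y j\<bar> = \<bar>(transfer_op b ^^ Suc j) \<phi> x - (transfer_op b ^^ Suc j) \<phi> y\<bar> / lam ^ Suc j"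
    unfolding R_term_def using lam_pos by (simp add: abs_divide del: funpow.simps)
  also have "\<dots> \<le> Lp / real b ^ Suc j / lam ^ Suc j"
    using lam_pos
    by (intro divide_right_mono transfer_iter_oscillation[OF b_pos phi_periodic phi_lipschitz]) simp
  finally show ?thesis
    by (simp only: divide_dilation_power)
qed

lemma R_term_le_dist: "\<bar>R_term x y j\<bar> \<le> Lp * r ^ Suc j * \<bar>x - y\<bar>"
proof -
  have lip: "\<bar>(transfer_op b ^^ m) \<phi> u - (transfer_op b ^^ m) \<phi> v\<bar> \<le> Lp / real b ^ m * \<bar>u - v\<bar>"
    for u v m
    using lipschitz_onD[OF transfer_iter_lipschitz[OF b_pos phi_lipschitz] UNIV_I UNIV_I]
    by (simp only: dist_real_def)
  have "\<bar>R_term x y j\<bar> = \<bar>(transfer_op b ^^ Suc j) \<phi> x - (transfer_op b ^^ Suc j) \<phi> y\<bar> / lam ^ Suc j"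
    unfolding R_term_def using lam_pos by (simp add: abs_divide del: funpow.simps)
  also have "\<dots> \<le> Lp / real b ^ Suc j * \<bar>x - y\<bar> / lam ^ Suc j"
    using lam_pos by (intro divide_right_mono lip) simp
  also have "\<dots> = Lp / real b ^ Suc j / lam ^ Suc j * \<bar>x - y\<bar>"
    by simp
  also have "\<dots> = Lp * r ^ Suc j * \<bar>x - y\<bar>"
    by (simp only: divide_dilation_power)
  finally show ?thesis .
qed

definition L_R :: real where
  "L_R = (\<Sum>j. Lp * r ^ Suc j)"

lemma R_majorant_summable: "summable (\<lambda>j. Lp * r ^ Suc j)"
  using r_pos r_lt_1 by (intro summable_mult summable_geometric summable_Suc_iff[THEN iffD2]) simp

lemma R_majorant_tail: "(\<Sum>j. Lp * r ^ Suc (j + m)) = L_R * r ^ m"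
  unfolding L_R_def using suminf_mult2[OF R_majorant_summable, of "r ^ m"]
  by (simp add: power_add mult.assoc)

lemma L_R_nonneg: "0 \<le> L_R"
  unfolding L_R_def using lipschitz_on_nonneg[OF phi_lipschitz] r_pos
  by (intro suminf_nonneg R_majorant_summable) simp

lemma R_term_summable: "summable (R_term x y)"
  by (rule summable_comparison_test'[OF R_majorant_summable]) (simp only: real_norm_def R_term_le)

text \<open>The limit of the corrections in transfer_iter_W, normalised at 0 to make it converge.\<close>

definition R :: "real \<Rightarrow> real" where
  "R y = (\<Sum>j. R_term y 0 j)"

lemma R_diff: "R x - R y = (\<Sum>j. R_term x y j)"
proof -
  have "R x - R y = (\<Sum>j. R_term x 0 j - R_term y 0 j)"
    unfolding R_def by (rule suminf_diff[OF R_term_summable R_term_summable])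
  also have "(\<lambda>j. R_term x 0 j - R_term y 0 j) = R_term x y"
    by (rule ext) (simp add: R_term_def diff_divide_distrib)
  finally show ?thesis .
qed

lemma R_lipschitz: "L_R-lipschitz_on UNIV R"
proof (rule lipschitz_onI)
  fix x y :: real
  have "\<bar>R x - R y\<bar> \<le> (\<Sum>j. Lp * r ^ Suc j * \<bar>x - y\<bar>)"
    unfolding R_diff
    by (rule norm_suminf_le[where 'a = real, unfolded real_norm_def, OF R_term_le_dist summable_mult2[OF R_majorant_summable]])
  also have "\<dots> = L_R * \<bar>x - y\<bar>"
    unfolding L_R_def by (rule suminf_mult2[OF R_majorant_summable, symmetric])
  finally show "dist (R x) (R y) \<le> L_R * dist x y"
    by (simp add: dist_real_def)
qed (rule L_R_nonneg)

lemma R_periodic: "is_period R 1"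
proof -
  have "R_term (x + 1) x = (\<lambda>_. 0)" for x
    unfolding R_term_def using is_periodD[OF transfer_iter_periodic[OF b_pos phi_periodic]]
    by (simp del: funpow.simps)
  then show ?thesis
    unfolding is_period_def using R_diff by (metis suminf_zero eq_iff_diff_eq_0)
qed

definition U :: "real \<Rightarrow> real" where
  "U y = W y + R y"

lemma U_periodic: "is_period U 1"
  using W_periodic R_periodic by (simp add: is_period_def U_def)

lemma U_continuous: "continuous_on UNIV U"
  unfolding U_def[abs_def]
  by (intro continuous_on_add W_continuous lipschitz_on_continuous_on[OF R_lipschitz])

lemma transfer_iter_W_increment:
  "(transfer_op b ^^ m) (\<lambda>x. W (x + t) - W x) y
     = lam ^ m * (W (y + real b ^ m * t) - W y + (\<Sum>j<m. R_term (y + real b ^ m * t) y j))"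
proof -
  define s where "s = real b ^ m * t"
  have "(transfer_op b ^^ m) (\<lambda>x. W (x + t) - W x) y
      = (transfer_op b ^^ m) (\<lambda>x. 1 * W (x + t) + (- 1) * W x) y"
    by simp
  also have "\<dots> = (transfer_op b ^^ m) W (y + s) - (transfer_op b ^^ m) W y"
    unfolding transfer_iter_linear transfer_iter_shift[OF b_pos] s_def by simp
  also have "\<dots> = lam ^ m * (W (y + s) - W y + (\<Sum>j<m. R_term (y + s) y j))"
    unfolding transfer_iter_W R_term_def
    by (simp add: algebra_simps sum_subtractf diff_divide_distrib del: funpow.simps)
  finally show ?thesis
    unfolding s_def .
qed

lemma U_increment_approx:
  "\<bar>U (y + real b ^ m * t) - U y - (transfer_op b ^^ m) (\<lambda>x. W (x + t) - W x) y / lam ^ m\<bar>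
     \<le> L_R * r ^ m"
proof -
  define s where "s = real b ^ m * t"
  have "U (y + s) - U y - (transfer_op b ^^ m) (\<lambda>x. W (x + t) - W x) y / lam ^ m
      = (\<Sum>j. R_term (y + s) y j) - (\<Sum>j<m. R_term (y + s) y j)"
    unfolding transfer_iter_W_increment U_def s_def[symmetric] using lam_pos R_diff[of "y + s" y]
    by simp
  also have "\<dots> = (\<Sum>j. R_term (y + s) y (j + m))"
    using suminf_split_initial_segment[OF R_term_summable, of "y + s" y m] by simp
  finally have "\<bar>U (y + s) - U y - (transfer_op b ^^ m) (\<lambda>x. W (x + t) - W x) y / lam ^ m\<bar>
      = \<bar>\<Sum>j. R_term (y + s) y (j + m)\<bar>" by simp
  also have "\<dots> \<le> (\<Sum>j. Lp * r ^ Suc (j + m))"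
    by (rule norm_suminf_le[where 'a = real, unfolded real_norm_def,
          OF R_term_le summable_ignore_initial_segment[OF R_majorant_summable]])
  finally show ?thesis
    unfolding s_def R_majorant_tail .
qed

lemma U_dilated_increment_le:
  assumes lip: "K-lipschitz_on UNIV (\<lambda>x. W (x + t) - W x)"
  shows "\<bar>U (y + real b ^ m * t) - U y\<bar> \<le> 2 * (K + 2 * L_R) * r ^ m"
proof -
  define s where "s = real b ^ m * t"
  define G where "G x = (transfer_op b ^^ m) (\<lambda>x. W (x + t) - W x) x / lam ^ m" for x
  have approx: "\<bar>U (x + s) - U x - G x\<bar> \<le> L_R * r ^ m" for x
    unfolding s_def G_def by (rule U_increment_approx)
  have G_osc: "\<bar>G x - G 0\<bar> \<le> K * r ^ m" for x
  proof -
    have "\<bar>G x - G 0\<bar> = \<bar>(transfer_op b ^^ m) (\<lambda>x. W (x + t) - W x) x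
        - (transfer_op b ^^ m) (\<lambda>x. W (x + t) - W x) 0\<bar> / lam ^ m"
      unfolding G_def using lam_pos by (simp add: diff_divide_distrib[symmetric] abs_divide)
    also have "\<dots> \<le> K / real b ^ m / lam ^ m"
      using lam_pos
      by (intro divide_right_mono transfer_iter_oscillation[OF b_pos is_period_increment[OF W_periodic] lip])
        simp
    finally show ?thesis
      by (simp only: divide_dilation_power)
  qed
  define \<kappa> where "\<kappa> = U (0 + s) - U 0"
  have near: "\<bar>U (x + s) - U x - \<kappa>\<bar> \<le> (K + 2 * L_R) * r ^ m" for x
    using approx[of x] approx[of 0] G_osc[of x] unfolding \<kappa>_def
    by (simp add: algebra_simps)
  obtain B where "\<And>x. \<bar>U x\<bar> \<le> B"
    using continuous_periodic_bounded[OF U_continuous U_periodic] by blast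
  then have "\<bar>\<kappa>\<bar> \<le> (K + 2 * L_R) * r ^ m"
    using near by (rule bounded_increment_constant_bound)
  then show ?thesis
    using near[of y] unfolding s_def by linarith
qed

lemma U_periods_separated:
  assumes "\<not> (\<exists>L. L-lipschitz_on UNIV W)"
  obtains \<epsilon> where "\<epsilon> > 0" and "\<And>p. is_period U p \<Longrightarrow> p \<noteq> 0 \<Longrightarrow> \<epsilon> \<le> \<bar>p\<bar>"
proof -
  have "\<exists>x. U x \<noteq> U 0"
  proof (rule ccontr)
    assume "\<not> (\<exists>x. U x \<noteq> U 0)"
    then have "W = (\<lambda>x. U 0 - R x)"
      by (auto simp: fun_eq_iff U_def algebra_simps)
    then have "L_R-lipschitz_on UNIV W"
      using lipschitz_on_diff[OF lipschitz_on_constant R_lipschitz] by simp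
    then show False
      using assms by blast
  qed
  then show thesis
    using nonconstant_continuous_periods_separated[OF U_continuous] that by blast
qed

end

theorem mainTheorem6:
  fixes \<phi> :: "real \<Rightarrow> real" and lam :: real and b :: nat
  assumes "b \<ge> 2"
    and "1 / real b < lam" and "lam < 1"
    and "\<forall>x. \<phi> (x + 1) = \<phi> x"
    and "\<exists>L. L-lipschitz_on UNIV \<phi>"
    and "\<not> (\<exists>L. L-lipschitz_on UNIV (weierstrass_fun \<phi> lam b))"
    and "regulating_period 2 (weierstrass_fun \<phi> lam b) t"
  shows "t \<in> \<rat>"
proof -
  obtain Lp where "Lp-lipschitz_on UNIV \<phi>"
    using assms(5) by blast
  then interpret weierstrass_setting \<phi> lam b Lp
    using assms(1-4) by unfold_locales (simp_all add: is_period_def)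
  obtain g' where "\<And>x. ((\<lambda>x. W (x + t) - W x) has_real_derivative g' x) (at x)"
    and "continuous_on UNIV g'"
    using C_k_has_continuous_derivative[OF assms(7)[unfolded regulating_period_def]] by auto
  then obtain K where "K-lipschitz_on UNIV (\<lambda>x. W (x + t) - W x)"
    using periodic_continuous_derivative_lipschitz is_period_increment[OF W_periodic] by metis
  then have "\<bar>U (y + real b ^ m * t) - U y\<bar> \<le> 2 * (K + 2 * L_R) * r ^ m" for m y
    by (rule U_dilated_increment_le)
  moreover obtain \<epsilon> where "\<epsilon> > 0" and "\<And>p. is_period U p \<Longrightarrow> p \<noteq> 0 \<Longrightarrow> \<epsilon> \<le> \<bar>p\<bar>"
    using U_periods_separated[OF assms(6)] by blast
  ultimately show ?thesis
    using rational_if_dilated_increments_decay[OF U_continuous U_periodic] r_pos r_lt_1 b_ge_2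
    by blast
qed

end
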